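(* Let $G$ be a finitely generated group hyperbolic relative to a finite collection $\mathcal P$, $S$ a finite generating set, $(\epsilon,R,D)$ thin-triangle constants, and $U\subset V\cup W$ a finite subset with $|U|\ge 2$. Then for every positive integer $r$, the $r$-hull $U_r$ is finite.
   Context: $\Gamma$ is the Cayley graph of $G$ w.r.t. $S$, $V=G$, $W$ the set of cosets $gP_\lambda$; relative hyperbolicity means the coned-off Cayley graph (vertex set $V\cup W$, edges of $\Gamma$ plus edges $(v,w)$ for $v\in w$) is fine (for each edge $e$ and integer $m$, finitely many circuits of length $\le m$ contain $e$) and $\delta$-hyperbolic. $|\cdot,\cdot|_S$ is extended to $V\cup W$ via distances in $\Gamma$ between corresponding elements/cosets. For a geodesic edge-path $p=(p_j)_{j=0}^\ell$ in $\Gamma$, $p_i$ is $(\epsilon,R)$-deep in $w\in W$ if $R\le i\le\ell-R$ and $|p_j,w|_S\le\epsilon$ for all $|j-i|\le R$. A geodesic from $a$ to $b$ ($a,b\in V\cup W$) is a geodesic of length $|a,b|_S$ starting at $a$ (if $a\in V$) or in $a$ (if $a\in W$), ending analogously at $b$; for $i>\ell$, $p_i:=p_\ell$. Positive integers $(\epsilon,R,D)$ are thin-triangle constants if: $D\ge\epsilon$; no vertex of a geodesic in $\Gamma$ is $(\epsilon,R)$-deep in two distinct cosets; and for all $a,b,c\in V\cup W$ with $a\ne b$, geodesics $p^{ab},p^{bc},p^{ac}$, $\ell=|a,b|_S$, $0\le i\le\ell$, with $z=w$ if $p^{ab}_i$ is $(\epsilon,R)$-deep in $w$ and $z=p^{ab}_i$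 otherwise, we have $|z,p^{ac}_i|_S\le D$ or $|z,p^{bc}_{\ell-i}|_S\le D$. The $r$-hull $U_r$ of finite $U$ is the union of all $v\in V$ with $|v,u|_S\le r$ for every $u\in U$, and all $w\in W$ with $|w,u|_S\le r+\epsilon$ for every $u\in U$. *)

theory Defs
  imports Complex_Main
begin

definition walk :: "('v \<Rightarrow> 'v \<Rightarrow> bool) \<Rightarrow> 'v list \<Rightarrow> bool" where
  "walk E p \<longleftrightarrow> p \<noteq> [] \<and> (\<forall>i. Suc i < length p \<longrightarrow> E (p ! i) (p ! Suc i))"

definition gdist :: "('v \<Rightarrow> 'v \<Rightarrow> bool) \<Rightarrow> 'v \<Rightarrow> 'v \<Rightarrow> nat" where
  "gdist E x y = (LEAST n. \<exists>p. walk E p \<and> hd p = x \<and> last p = y \<and> length p = Suc n)"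

text \<open>A circuit: a closed edge path without repeated vertices, given by its
  cyclic list of vertices; its length is the number of its edges = vertices.\<close>
definition circuit :: "('v \<Rightarrow> 'v \<Rightarrow> bool) \<Rightarrow> 'v list \<Rightarrow> bool" where
  "circuit E c \<longleftrightarrow> length c \<ge> 3 \<and> distinct c \<and>
     (\<forall>i < length c. E (c ! i) (c ! ((i + 1) mod length c)))"

definition circuit_contains_edge :: "'v list \<Rightarrow> 'v \<Rightarrow> 'v \<Rightarrow> bool" where
  "circuit_contains_edge c a b \<longleftrightarrow>
     (\<exists>i < length c. {c ! i, c ! ((i + 1) mod length c)} = {a, b})"

definition fine_graph :: "('v \<Rightarrow> 'v \<Rightarrow> bool) \<Rightarrow> bool" where
  "fine_graph E \<longleftrightarrow> (\<forall>a b. E a b \<longrightarrow> (\<forall>m::nat.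
      finite {c. circuit E c \<and> length c \<le> m \<and> circuit_contains_edge c a b}))"

definition gromov_product :: "('v \<Rightarrow> 'v \<Rightarrow> bool) \<Rightarrow> 'v \<Rightarrow> 'v \<Rightarrow> 'v \<Rightarrow> real" where
  "gromov_product E w x y =
     (real (gdist E x w) + real (gdist E y w) - real (gdist E x y)) / 2"

definition hyperbolic_graph :: "('v \<Rightarrow> 'v \<Rightarrow> bool) \<Rightarrow> 'v set \<Rightarrow> real \<Rightarrow> bool" where
  "hyperbolic_graph E Vs \<delta> \<longleftrightarrow>
     (\<forall>x\<in>Vs. \<forall>y\<in>Vs. \<exists>p. walk E p \<and> hd p = x \<and> last p = y) \<and>
     (\<forall>w\<in>Vs. \<forall>x\<in>Vs. \<forall>y\<in>Vs. \<forall>z\<in>Vs.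
        gromov_product E w x y \<ge> min (gromov_product E w x z) (gromov_product E w z y) - \<delta>)"

text \<open>The group \<open>G\<close> is the whole type \<open>'g::group_add\<close> (written additively, not
  necessarily commutative).  Cayley graph adjacency w.r.t. \<open>S\<close>: \<open>g ~ g s\<close>.\<close>
definition cay_adj :: "'g::group_add set \<Rightarrow> 'g \<Rightarrow> 'g \<Rightarrow> bool" where
  "cay_adj S g h \<longleftrightarrow> (\<exists>s\<in>S. h = g + s \<or> g = h + s)"

definition is_subgroup :: "'g::group_add set \<Rightarrow> bool" where
  "is_subgroup H \<longleftrightarrow> 0 \<in> H \<and> (\<forall>x\<in>H. \<forall>y\<in>H. x + y \<in> H) \<and> (\<forall>x\<in>H. - x \<in> H)"

definition lcoset :: "'g::group_add \<Rightarrow> 'g set \<Rightarrow> 'g set" where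
  "lcoset g H = (\<lambda>x. g + x) ` H"

definition cosets :: "'i set \<Rightarrow> ('i \<Rightarrow> 'g::group_add set) \<Rightarrow> 'g set set" where
  "cosets \<Lambda> P = {lcoset g (P l) | g l. l \<in> \<Lambda>}"

text \<open>Elements of \<open>V \<union> W\<close> are encoded as \<open>Inl g\<close> (vertex) or \<open>Inr w\<close> (coset).\<close>
definition VW :: "'i set \<Rightarrow> ('i \<Rightarrow> 'g::group_add set) \<Rightarrow> ('g + 'g set) set" where
  "VW \<Lambda> P = range Inl \<union> Inr ` cosets \<Lambda> P"

fun coned_adj :: "'g::group_add set \<Rightarrow> 'i set \<Rightarrow> ('i \<Rightarrow> 'g set) \<Rightarrow> ('g + 'g set) \<Rightarrow> ('g + 'g set) \<Rightarrow> bool" where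
  "coned_adj S \<Lambda> P (Inl g) (Inl h) = cay_adj S g h"
| "coned_adj S \<Lambda> P (Inl g) (Inr w) = (w \<in> cosets \<Lambda> P \<and> g \<in> w)"
| "coned_adj S \<Lambda> P (Inr w) (Inl g) = (w \<in> cosets \<Lambda> P \<and> g \<in> w)"
| "coned_adj S \<Lambda> P (Inr w) (Inr w') = False"

definition rel_hyperbolic :: "'g::group_add set \<Rightarrow> 'i set \<Rightarrow> ('i \<Rightarrow> 'g set) \<Rightarrow> bool" where
  "rel_hyperbolic S \<Lambda> P \<longleftrightarrow>
     finite S \<and> (\<forall>g h. \<exists>p. walk (cay_adj S) p \<and> hd p = g \<and> last p = h) \<and>
     finite \<Lambda> \<and> (\<forall>l\<in>\<Lambda>. is_subgroup (P l)) \<and>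
     fine_graph (coned_adj S \<Lambda> P) \<and>
     (\<exists>\<delta>. hyperbolic_graph (coned_adj S \<Lambda> P) (VW \<Lambda> P) \<delta>)"

definition dS :: "'g::group_add set \<Rightarrow> 'g \<Rightarrow> 'g \<Rightarrow> nat" where
  "dS S = gdist (cay_adj S)"

fun dVW :: "'g::group_add set \<Rightarrow> ('g + 'g set) \<Rightarrow> ('g + 'g set) \<Rightarrow> nat" where
  "dVW S (Inl g) (Inl h) = dS S g h"
| "dVW S (Inl g) (Inr w) = (LEAST n. \<exists>h\<in>w. dS S g h = n)"
| "dVW S (Inr w) (Inl g) = (LEAST n. \<exists>h\<in>w. dS S h g = n)"
| "dVW S (Inr w) (Inr w') = (LEAST n. \<exists>g\<in>w. \<exists>h\<in>w'. dS S g h = n)"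

text \<open>An edge path \<open>p = (p\<^sub>0,\<dots>,p\<^sub>\<ell>)\<close> is the list of its vertices (length \<open>\<ell>+1\<close>).\<close>
definition geodesic_path :: "'g::group_add set \<Rightarrow> 'g list \<Rightarrow> bool" where
  "geodesic_path S p \<longleftrightarrow> walk (cay_adj S) p \<and> length p = Suc (dS S (hd p) (last p))"

text \<open>\<open>p\<^sub>i\<close>, with the convention \<open>p\<^sub>i = p\<^sub>\<ell>\<close> for \<open>i > \<ell>\<close>.\<close>
definition pt :: "'g list \<Rightarrow> nat \<Rightarrow> 'g" where
  "pt p i = p ! min i (length p - 1)"

definition deep :: "'g::group_add set \<Rightarrow> nat \<Rightarrow> nat \<Rightarrow> 'g list \<Rightarrow> nat \<Rightarrow> 'g set \<Rightarrow> bool" where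
  "deep S \<epsilon> R p i w \<longleftrightarrow> R \<le> i \<and> i + R \<le> length p - 1 \<and>
     (\<forall>j. i - R \<le> j \<and> j \<le> i + R \<longrightarrow> dVW S (Inl (pt p j)) (Inr w) \<le> \<epsilon>)"

fun starts_at :: "('g + 'g set) \<Rightarrow> 'g \<Rightarrow> bool" where
  "starts_at (Inl g) x = (x = g)"
| "starts_at (Inr w) x = (x \<in> w)"

definition geodesic_from_to :: "'g::group_add set \<Rightarrow> ('g + 'g set) \<Rightarrow> ('g + 'g set) \<Rightarrow> 'g list \<Rightarrow> bool" where
  "geodesic_from_to S a b p \<longleftrightarrow> geodesic_path S p \<and> length p = Suc (dVW S a b) \<and>
     starts_at a (hd p) \<and> starts_at b (last p)"

definition thin_triangle_constants ::
  "'g::group_add set \<Rightarrow> 'i set \<Rightarrow> ('i \<Rightarrow> 'g set) \<Rightarrow> nat \<Rightarrow> nat \<Rightarrow> nat \<Rightarrow> bool" where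
  "thin_triangle_constants S \<Lambda> P \<epsilon> R D \<longleftrightarrow>
     0 < \<epsilon> \<and> 0 < R \<and> 0 < D \<and> \<epsilon> \<le> D \<and>
     (\<forall>p i w1 w2. geodesic_path S p \<and> w1 \<in> cosets \<Lambda> P \<and> w2 \<in> cosets \<Lambda> P \<and>
        deep S \<epsilon> R p i w1 \<and> deep S \<epsilon> R p i w2 \<longrightarrow> w1 = w2) \<and>
     (\<forall>a\<in>VW \<Lambda> P. \<forall>b\<in>VW \<Lambda> P. \<forall>c\<in>VW \<Lambda> P. \<forall>pab pbc pac. a \<noteq> b \<and>
        geodesic_from_to S a b pab \<and> geodesic_from_to S b c pbc \<and> geodesic_from_to S a c pac \<longrightarrow>
        (\<forall>i \<le> dVW S a b.
           (\<forall>w\<in>cosets \<Lambda> P. deep S \<epsilon> R pab i w \<longrightarrow>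
              dVW S (Inr w) (Inl (pt pac i)) \<le> D \<or>
              dVW S (Inr w) (Inl (pt pbc (dVW S a b - i))) \<le> D) \<and>
           ((\<not> (\<exists>w\<in>cosets \<Lambda> P. deep S \<epsilon> R pab i w)) \<longrightarrow>
              dVW S (Inl (pt pab i)) (Inl (pt pac i)) \<le> D \<or>
              dVW S (Inl (pt pab i)) (Inl (pt pbc (dVW S a b - i))) \<le> D)))"

definition r_hull :: "'g::group_add set \<Rightarrow> 'i set \<Rightarrow> ('i \<Rightarrow> 'g set) \<Rightarrow> nat \<Rightarrow>
    ('g + 'g set) set \<Rightarrow> nat \<Rightarrow> ('g + 'g set) set" where
  "r_hull S \<Lambda> P \<epsilon> U r =
     {Inl v | v. \<forall>u\<in>U. dVW S (Inl v) u \<le> r} \<union>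
     {Inr w | w. w \<in> cosets \<Lambda> P \<and> (\<forall>u\<in>U. dVW S (Inr w) u \<le> r + \<epsilon>)}"

end

theory Submission
  imports Defs
begin

text \<open>If \<open>U\<close> contains a group
  element \<open>u\<close>, the hull lies in the ball of radius \<open>r + \<epsilon>\<close> around \<open>u\<close> together with the
  finitely many cosets meeting that ball.  Otherwise \<open>U\<close> contains two distinct cosets
  \<open>w\<^sub>1, w\<^sub>2\<close>.  Every hull element other than \<open>w\<^sub>1, w\<^sub>2\<close> is close to some \<open>a \<in> w\<^sub>1\<close> from which a
  walk of bounded length, passing through the cone point \<open>w\<^sub>2\<close> but avoiding the cone point
  \<open>w\<^sub>1\<close>, leads to a fixed \<open>x\<^sub>1 \<in> w\<^sub>1\<close>.  Closing such a walk up through \<open>w\<^sub>1\<close> gives a short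
  circuit containing the edge \<open>(w\<^sub>1, x\<^sub>1)\<close>; by fineness there are finitely many of them, hence
  finitely many such \<open>a\<close>.\<close>

lemma walk_Cons_iff: "walk E (x # p) \<longleftrightarrow> p = [] \<or> (E x (hd p) \<and> walk E p)"
proof (cases p)
  case (Cons y q)
  have "(\<forall>i. Suc i < length (x # y # q) \<longrightarrow> E ((x # y # q) ! i) ((x # y # q) ! Suc i)) \<longleftrightarrow>
      E x y \<and> (\<forall>i. Suc i < length (y # q) \<longrightarrow> E ((y # q) ! i) ((y # q) ! Suc i))"
    by (metis Suc_less_eq length_Cons nat.exhaust nth_Cons_0 nth_Cons_Suc zero_less_Suc)
  then show ?thesis using Cons by (simp add: walk_def)
qed (simp add: walk_def)

lemma walk_singleton [simp]: "walk E [x]"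
  by (simp add: walk_def)

lemma walk_nonempty: "walk E p \<Longrightarrow> p \<noteq> []"
  by (simp add: walk_def)

lemma walk_append_tl:
  "walk E p \<Longrightarrow> walk E q \<Longrightarrow> last p = hd q \<Longrightarrow> walk E (p @ tl q)"
proof (induction p)
  case (Cons x p)
  show ?case
  proof (cases p)
    case Nil
    with Cons.prems show ?thesis
      by (metis append_Cons append_Nil last_ConsL list.collapse walk_nonempty)
  next
    case (Cons y p')
    with Cons.prems Cons.IH show ?thesis by (auto simp: walk_Cons_iff)
  qed
qed (simp add: walk_def)

lemma walk_appendD2: "walk E (xs @ ys) \<Longrightarrow> ys \<noteq> [] \<Longrightarrow> walk E ys"
  by (induction xs) (auto simp: walk_Cons_iff)

lemma walk_map: "walk E p \<Longrightarrow> (\<And>x y. E x y \<Longrightarrow> F (f x) (f y)) \<Longrightarrow> walk F (map f p)"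
  unfolding walk_def by auto

lemma walk_rev:
  assumes "walk E p" and sym: "\<And>x y. E x y \<Longrightarrow> E y x"
  shows "walk E (rev p)"
  unfolding walk_def
proof (intro conjI allI impI)
  show "rev p \<noteq> []" using assms walk_nonempty by simp
  fix i assume i: "Suc i < length (rev p)"
  define j where "j = length p - 2 - i"
  have "E (p ! j) (p ! Suc j)" using assms(1) i unfolding walk_def j_def by auto
  moreover have "rev p ! i = p ! Suc j" "rev p ! Suc i = p ! j"
    using i by (auto simp: rev_nth j_def Suc_diff_Suc numeral_2_eq_2)
  ultimately show "E (rev p ! i) (rev p ! Suc i)" using sym by simp
qed

lemma walk_remove_loops:
  "walk E p \<Longrightarrow> \<exists>q. walk E q \<and> hd q = hd p \<and> last q = last p \<and> distinct q \<and>
     set q \<subseteq> set p \<and> length q \<le> length p"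
proof (induction p)
  case (Cons x p)
  show ?case
  proof (cases p)
    case Nil then show ?thesis by (intro exI[of _ "[x]"]) simp
  next
    case (Cons y p')
    have wp: "walk E p" and e: "E x y" using Cons.prems Cons by (auto simp: walk_Cons_iff)
    obtain q where q: "walk E q" "hd q = hd p" "last q = last p" "distinct q"
        "set q \<subseteq> set p" "length q \<le> length p"
      using Cons.IH wp by blast
    show ?thesis
    proof (cases "x \<in> set q")
      case False
      with q e Cons walk_nonempty[OF q(1)] show ?thesis
        by (intro exI[of _ "x # q"]) (auto simp: walk_Cons_iff)
    next
      case True
      then obtain ys zs where qs: "q = ys @ x # zs" by (meson split_list)
      with q walk_appendD2[of E ys "x # zs"] Cons show ?thesis
        by (intro exI[of _ "x # zs"]) auto
    qed
  qed
qed (simp add: walk_def)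

definition reachable_in :: "('v \<Rightarrow> 'v \<Rightarrow> bool) \<Rightarrow> 'v set \<Rightarrow> 'v \<Rightarrow> 'v \<Rightarrow> nat \<Rightarrow> bool" where
  "reachable_in E X x y n \<longleftrightarrow>
     (\<exists>p. walk E p \<and> hd p = x \<and> last p = y \<and> length p \<le> Suc n \<and> set p \<subseteq> X)"

lemma reachable_in_trans:
  assumes "reachable_in E X x y n" "reachable_in E X y z m"
  shows "reachable_in E X x z (n + m)"
proof -
  obtain p where p: "walk E p" "hd p = x" "last p = y" "length p \<le> Suc n" "set p \<subseteq> X"
    using assms(1) reachable_in_def by metis
  obtain q where q: "walk E q" "hd q = y" "last q = z" "length q \<le> Suc m" "set q \<subseteq> X"
    using assms(2) reachable_in_def by metis
  have "p \<noteq> []" "q \<noteq> []" using p(1) q(1) walk_nonempty by auto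
  with p q walk_append_tl[OF p(1) q(1)] show ?thesis
    unfolding reachable_in_def by (intro exI[of _ "p @ tl q"]) (cases q; auto)
qed

lemma reachable_in_edge: "E x y \<Longrightarrow> x \<in> X \<Longrightarrow> y \<in> X \<Longrightarrow> reachable_in E X x y 1"
  unfolding reachable_in_def by (intro exI[of _ "[x, y]"]) (auto simp: walk_Cons_iff)

lemma reachable_in_sym:
  "reachable_in E X x y n \<Longrightarrow> (\<And>x y. E x y \<Longrightarrow> E y x) \<Longrightarrow> reachable_in E X y x n"
  unfolding reachable_in_def by (metis walk_rev hd_rev last_rev length_rev set_rev)

lemma reachable_in_mono:
  "reachable_in E X x y n \<Longrightarrow> X \<subseteq> Y \<Longrightarrow> n \<le> m \<Longrightarrow> reachable_in E Y x y m"
  unfolding reachable_in_def by (metis Suc_le_mono order_trans)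

lemma reachable_in_map:
  "reachable_in E X x y n \<Longrightarrow> (\<And>x y. E x y \<Longrightarrow> F (f x) (f y)) \<Longrightarrow>
     reachable_in F (f ` X) (f x) (f y) n"
proof -
  assume "reachable_in E X x y n" and F: "\<And>x y. E x y \<Longrightarrow> F (f x) (f y)"
  then obtain p where "walk E p" "hd p = x" "last p = y" "length p \<le> Suc n" "set p \<subseteq> X"
    unfolding reachable_in_def by blast
  with F show ?thesis
    unfolding reachable_in_def
    by (intro exI[of _ "map f p"]) (auto simp: walk_map hd_map last_map walk_nonempty)
qed

lemma reachable_in_SucD:
  assumes "reachable_in E X x y (Suc n)"
  shows "x = y \<or> (\<exists>z. E x z \<and> reachable_in E X z y n)"
proof -
  obtain p where p: "walk E p" "hd p = x" "last p = y" "length p \<le> Suc (Suc n)" "set p \<subseteq> X"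
    using assms unfolding reachable_in_def by blast
  then obtain a q where pq: "p = a # q" using walk_nonempty by (cases p) auto
  show ?thesis
  proof (cases q)
    case Nil then show ?thesis using pq p by simp
  next
    case (Cons b q')
    with p pq have "E x b" "reachable_in E X b y n"
      unfolding reachable_in_def by (auto simp: walk_Cons_iff intro!: exI[of _ q])
    then show ?thesis by blast
  qed
qed

subsection \<open>The Cayley graph is locally finite\<close>

lemma reachable_in_of_dS_le:
  assumes conn: "\<forall>g h. \<exists>p. walk (cay_adj S) p \<and> hd p = g \<and> last p = h"
    and "dS S g h \<le> n"
  shows "reachable_in (cay_adj S) UNIV g h n"
proof -
  have "\<exists>n p. walk (cay_adj S) p \<and> hd p = g \<and> last p = h \<and> length p = Suc n"
    using conn by (metis Suc_pred length_greater_0_conv walk_def)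
  from LeastI_ex[OF this] obtain p where
    "walk (cay_adj S) p" "hd p = g" "last p = h" "length p = Suc (dS S g h)"
    unfolding dS_def gdist_def by blast
  with assms(2) show ?thesis unfolding reachable_in_def by auto
qed

lemma finite_Cayley_reachable:
  assumes "finite S"
  shows "finite {h. reachable_in (cay_adj S) UNIV h u n}"
proof (induction n)
  case 0
  have "{h. reachable_in (cay_adj S) UNIV h u 0} \<subseteq> {u}"
    unfolding reachable_in_def
    by clarify (metis le_Suc_eq le_zero_eq length_0_conv walk_nonempty hd_conv_nth
        last_conv_nth diff_Suc_1)
  then show ?case using finite_subset by blast
next
  case (Suc n)
  let ?B = "{h. reachable_in (cay_adj S) UNIV h u n}"
  have "{h. reachable_in (cay_adj S) UNIV h u (Suc n)} \<subseteq>
      {u} \<union> (\<Union>s\<in>S. (\<lambda>y. y - s) ` ?B \<union> (\<lambda>y. y + s) ` ?B)"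
  proof
    fix h assume "h \<in> {h. reachable_in (cay_adj S) UNIV h u (Suc n)}"
    then have "h = u \<or> (\<exists>z s. z \<in> ?B \<and> s \<in> S \<and> (h = z - s \<or> h = z + s))"
      unfolding cay_adj_def by (fastforce dest: reachable_in_SucD)
    then show "h \<in> {u} \<union> (\<Union>s\<in>S. (\<lambda>y. y - s) ` ?B \<union> (\<lambda>y. y + s) ` ?B)" by blast
  qed
  moreover have "finite ({u} \<union> (\<Union>s\<in>S. (\<lambda>y. y - s) ` ?B \<union> (\<lambda>y. y + s) ` ?B))"
    using Suc assms by auto
  ultimately show ?case using finite_subset by blast
qed

lemma finite_dS_ball:
  assumes "finite S" "\<forall>g h. \<exists>p. walk (cay_adj S) p \<and> hd p = g \<and> last p = h"
  shows "finite {h. dS S h u \<le> n}"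
  using finite_Cayley_reachable[OF assms(1), of u n] reachable_in_of_dS_le[OF assms(2)]
  by (metis (mono_tags, lifting) mem_Collect_eq rev_finite_subset subsetI)

lemma lcoset_eq_of_mem:
  assumes "is_subgroup H" "h \<in> lcoset g H"
  shows "lcoset h H = lcoset g H"
proof -
  obtain x where x: "x \<in> H" "h = g + x" using assms(2) by (auto simp: lcoset_def)
  have "(\<lambda>y. x + y) ` H = H"
  proof
    show "(\<lambda>y. x + y) ` H \<subseteq> H" using assms(1) x(1) unfolding is_subgroup_def by auto
    show "H \<subseteq> (\<lambda>y. x + y) ` H"
    proof
      fix y assume "y \<in> H"
      then have "- x + y \<in> H" using assms(1) x(1) unfolding is_subgroup_def by auto
      moreover have "y = x + (- x + y)" by (simp add: add.assoc[symmetric])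
      ultimately show "y \<in> (\<lambda>y. x + y) ` H" by blast
    qed
  qed
  moreover have "(\<lambda>y. h + y) = (\<lambda>y. g + y) \<circ> (\<lambda>y. x + y)"
    by (rule ext) (simp add: x(2) add.assoc)
  ultimately show ?thesis unfolding lcoset_def by (metis image_comp)
qed

lemma coset_nonempty:
  assumes "w \<in> cosets \<Lambda> P" "\<forall>l\<in>\<Lambda>. is_subgroup (P l)"
  obtains x where "x \<in> w"
proof -
  obtain g l where "w = lcoset g (P l)" "l \<in> \<Lambda>" using assms(1) unfolding cosets_def by blast
  with assms(2) have "g \<in> w" unfolding is_subgroup_def lcoset_def by force
  then show thesis by (rule that)
qed

lemma finite_cosets_containing:
  assumes "finite \<Lambda>" "\<forall>l\<in>\<Lambda>. is_subgroup (P l)"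
  shows "finite {w \<in> cosets \<Lambda> P. h \<in> w}"
proof -
  have "{w \<in> cosets \<Lambda> P. h \<in> w} \<subseteq> (\<lambda>l. lcoset h (P l)) ` \<Lambda>"
    using assms(2) lcoset_eq_of_mem unfolding cosets_def by fastforce
  then show ?thesis using assms(1) finite_surj by blast
qed

lemma dVW_Inl_Inr_le:
  assumes "dVW S (Inl v) (Inr w) \<le> k" "h0 \<in> w"
  shows "\<exists>h\<in>w. dS S v h \<le> k"
proof -
  have "\<exists>n. \<exists>h\<in>w. dS S v h = n" using assms(2) by blast
  from LeastI_ex[OF this] obtain h where "h \<in> w" "dS S v h = dVW S (Inl v) (Inr w)" by auto
  with assms(1) show ?thesis by (metis order.eq_iff order.trans)
qed

lemma dVW_Inr_Inl_le:
  assumes "dVW S (Inr w) (Inl u) \<le> k" "h0 \<in> w"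
  shows "\<exists>h\<in>w. dS S h u \<le> k"
proof -
  have "\<exists>n. \<exists>h\<in>w. dS S h u = n" using assms(2) by blast
  from LeastI_ex[OF this] obtain h where "h \<in> w" "dS S h u = dVW S (Inr w) (Inl u)" by auto
  with assms(1) show ?thesis by (metis order.eq_iff order.trans)
qed

lemma dVW_Inr_Inr_le:
  assumes "dVW S (Inr w) (Inr w') \<le> k" "g0 \<in> w" "h0 \<in> w'"
  shows "\<exists>g\<in>w. \<exists>h\<in>w'. dS S g h \<le> k"
proof -
  have "\<exists>n. \<exists>g\<in>w. \<exists>h\<in>w'. dS S g h = n" using assms(2,3) by blast
  from LeastI_ex[OF this] obtain g h where "g \<in> w" "h \<in> w'" "dS S g h = dVW S (Inr w) (Inr w')"
    by auto
  with assms(1) show ?thesis by (metis order.eq_iff order.trans)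
qed

definition coned_ball :: "'g::group_add set \<Rightarrow> 'i set \<Rightarrow> ('i \<Rightarrow> 'g set) \<Rightarrow> 'g \<Rightarrow> nat \<Rightarrow>
    ('g + 'g set) set" where
  "coned_ball S \<Lambda> P a n =
     Inl ` {v. dS S v a \<le> n} \<union> Inr ` {w \<in> cosets \<Lambda> P. \<exists>h\<in>w. dS S h a \<le> n}"

lemma finite_coned_ball:
  assumes "finite S" "\<forall>g h. \<exists>p. walk (cay_adj S) p \<and> hd p = g \<and> last p = h"
    and "finite \<Lambda>" "\<forall>l\<in>\<Lambda>. is_subgroup (P l)"
  shows "finite (coned_ball S \<Lambda> P a n)"
proof -
  have "{w \<in> cosets \<Lambda> P. \<exists>h\<in>w. dS S h a \<le> n} =
      (\<Union>h\<in>{h. dS S h a \<le> n}. {w \<in> cosets \<Lambda> P. h \<in> w})"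
    by blast
  then show ?thesis
    unfolding coned_ball_def
    using finite_dS_ball[OF assms(1,2)] finite_cosets_containing[OF assms(3,4)] by auto
qed

lemma r_hull_subset_coned_ball:
  assumes "Inl u \<in> U" "\<forall>l\<in>\<Lambda>. is_subgroup (P l)"
  shows "r_hull S \<Lambda> P \<epsilon> U r \<subseteq> coned_ball S \<Lambda> P u (r + \<epsilon>)"
proof
  fix x assume x: "x \<in> r_hull S \<Lambda> P \<epsilon> U r"
  show "x \<in> coned_ball S \<Lambda> P u (r + \<epsilon>)"
  proof (cases x)
    case (Inl v)
    with x assms(1) have "dS S v u \<le> r" unfolding r_hull_def by auto
    with Inl show ?thesis unfolding coned_ball_def by auto
  next
    case (Inr w)
    with x assms(1) have w: "w \<in> cosets \<Lambda> P" "dVW S (Inr w) (Inl u) \<le> r + \<epsilon>"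
      unfolding r_hull_def by auto
    obtain h0 where "h0 \<in> w" using coset_nonempty[OF w(1) assms(2)] .
    with w(2) obtain h where "h \<in> w" "dS S h u \<le> r + \<epsilon>" using dVW_Inr_Inl_le by blast
    with w(1) Inr show ?thesis unfolding coned_ball_def by auto
  qed
qed

lemma coned_adj_sym: "coned_adj S \<Lambda> P x y \<Longrightarrow> coned_adj S \<Lambda> P y x"
  by (cases x; cases y) (auto simp: cay_adj_def)

lemma coned_reachable_of_dS_le:
  assumes conn: "\<forall>g h. \<exists>p. walk (cay_adj S) p \<and> hd p = g \<and> last p = h"
    and "dS S g h \<le> n" "range Inl \<subseteq> X"
  shows "reachable_in (coned_adj S \<Lambda> P) X (Inl g) (Inl h) n"
    and "reachable_in (coned_adj S \<Lambda> P) X (Inl h) (Inl g) n"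
proof -
  have "reachable_in (coned_adj S \<Lambda> P) (range Inl) (Inl g) (Inl h) n"
    by (rule reachable_in_map[OF reachable_in_of_dS_le[OF assms(1,2)]]) simp
  then show "reachable_in (coned_adj S \<Lambda> P) X (Inl g) (Inl h) n"
    by (rule reachable_in_mono[OF _ assms(3) order_refl])
  then show "reachable_in (coned_adj S \<Lambda> P) X (Inl h) (Inl g) n"
    by (rule reachable_in_sym) (rule coned_adj_sym)
qed

lemma coned_reachable_in_coset:
  assumes "w \<in> cosets \<Lambda> P" "b \<in> w" "c \<in> w" "Inr w \<in> X" "range Inl \<subseteq> X"
  shows "reachable_in (coned_adj S \<Lambda> P) X (Inl b) (Inl c) 2"
proof -
  have "reachable_in (coned_adj S \<Lambda> P) X (Inl b) (Inr w) 1"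
    by (rule reachable_in_edge) (use assms in auto)
  moreover have "reachable_in (coned_adj S \<Lambda> P) X (Inr w) (Inl c) 1"
    by (rule reachable_in_edge) (use assms in auto)
  ultimately have "reachable_in (coned_adj S \<Lambda> P) X (Inl b) (Inl c) (1 + 1)"
    by (rule reachable_in_trans)
  then show ?thesis by (simp only: one_add_one)
qed

lemma fine_graphD:
  "fine_graph E \<Longrightarrow> E a b \<Longrightarrow>
     finite {c. circuit E c \<and> length c \<le> m \<and> circuit_contains_edge c a b}"
  unfolding fine_graph_def by blast

lemma circuit_through_cone_point:
  assumes q: "walk (coned_adj S \<Lambda> P) q" "hd q = Inl a" "last q = Inl x" "distinct q"
    "Inr w \<notin> set q"
    and w: "w \<in> cosets \<Lambda> P" "a \<in> w" "x \<in> w" "a \<noteq> x"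
  shows "circuit (coned_adj S \<Lambda> P) (Inr w # q)"
    and "circuit_contains_edge (Inr w # q) (Inr w) (Inl x)"
proof -
  let ?c = "Inr w # q"
  have "q \<noteq> []" using q(1) walk_nonempty by blast
  have lq: "length q \<ge> 2"
  proof (rule ccontr)
    assume "\<not> 2 \<le> length q"
    moreover have "0 < length q" using \<open>q \<noteq> []\<close> by simp
    ultimately have "length q = 1" by linarith
    then obtain y where "q = [y]" by (metis One_nat_def length_0_conv length_Suc_conv)
    with q(2,3) w(4) show False by simp
  qed
  have first_c: "?c ! 1 = Inl a" using q(2) \<open>q \<noteq> []\<close> by (simp add: hd_conv_nth)
  have last_c: "?c ! length q = Inl x" using q(3) \<open>q \<noteq> []\<close> by (simp add: last_conv_nth)
  show "circuit (coned_adj S \<Lambda> P) ?c" unfolding circuit_def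
  proof (intro conjI allI impI)
    show "3 \<le> length ?c" using lq by simp
    show "distinct ?c" using q(4,5) by simp
    fix i assume i: "i < length ?c"
    consider "i = 0" | "i = length q" | j where "i = Suc j" "Suc j < length q"
      using i by (cases i) (auto intro: Suc_lessI)
    then show "coned_adj S \<Lambda> P (?c ! i) (?c ! ((i + 1) mod length ?c))"
    proof cases
      case 1
      moreover have "(0 + 1) mod length ?c = 1" using lq by auto
      ultimately show ?thesis using first_c w(1,2) by simp
    next
      case 2
      moreover have "(length q + 1) mod length ?c = 0" by simp
      ultimately show ?thesis using last_c w(1,3) by simp
    next
      case (3 j)
      then have "(i + 1) mod length ?c = Suc (Suc j)" by simp
      moreover have "coned_adj S \<Lambda> P (q ! j) (q ! Suc j)" using q(1) 3(2) unfolding walk_def by blast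
      ultimately show ?thesis using 3(1) by simp
    qed
  qed
  show "circuit_contains_edge ?c (Inr w) (Inl x)"
    unfolding circuit_contains_edge_def using last_c
    by (intro exI[of _ "length q"]) (auto simp: insert_commute)
qed

lemma finite_coset_points_reachable_avoiding_cone:
  assumes fine: "fine_graph (coned_adj S \<Lambda> P)" and w: "w \<in> cosets \<Lambda> P" and x: "x \<in> w"
  shows "finite {a \<in> w. reachable_in (coned_adj S \<Lambda> P) (- {Inr w}) (Inl a) (Inl x) K}"
proof -
  let ?E = "coned_adj S \<Lambda> P"
  let ?C = "{c. circuit ?E c \<and> length c \<le> Suc (Suc K) \<and> circuit_contains_edge c (Inr w) (Inl x)}"
  have "finite ?C" by (rule fine_graphD[OF fine]) (use w x in simp)
  moreover have "{a \<in> w. reachable_in ?E (- {Inr w}) (Inl a) (Inl x) K} \<subseteq>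
      insert x ((\<lambda>c. projl (c ! 1)) ` ?C)"
  proof
    fix a assume "a \<in> {a \<in> w. reachable_in ?E (- {Inr w}) (Inl a) (Inl x) K}"
    then have a: "a \<in> w" and "reachable_in ?E (- {Inr w}) (Inl a) (Inl x) K" by auto
    then obtain p where p: "walk ?E p" "hd p = Inl a" "last p = Inl x" "length p \<le> Suc K"
        "set p \<subseteq> - {Inr w}"
      unfolding reachable_in_def by blast
    obtain q where q: "walk ?E q" "hd q = hd p" "last q = last p" "distinct q"
        "set q \<subseteq> set p" "length q \<le> length p"
      using walk_remove_loops[OF p(1)] by blast
    have "Inr w \<notin> set q" using q(5) p(5) by blast
    show "a \<in> insert x ((\<lambda>c. projl (c ! 1)) ` ?C)"
    proof (cases "a = x")
      case False
      note circ = circuit_through_cone_point[OF q(1) q(2,3)[unfolded p(2,3)] q(4)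
          \<open>Inr w \<notin> set q\<close> w a x False]
      have "length (Inr w # q) \<le> Suc (Suc K)" using q(6) p(4) by simp
      with circ have "Inr w # q \<in> ?C" by (intro CollectI conjI)
      moreover have "a = projl ((Inr w # q) ! 1)"
        using q(2) p(2) walk_nonempty[OF q(1)] by (simp add: hd_conv_nth)
      ultimately show ?thesis by (intro insertI2 image_eqI[of a "\<lambda>c. projl (c ! 1)" "Inr w # q"])
    qed simp
  qed
  ultimately show ?thesis using finite_subset by blast
qed

lemma r_hull_anchored_in_coset:
  assumes conn: "\<forall>g h. \<exists>p. walk (cay_adj S) p \<and> hd p = g \<and> last p = h"
    and sg: "\<forall>l\<in>\<Lambda>. is_subgroup (P l)"
    and U: "Inr w1 \<in> U" "Inr w2 \<in> U" "w1 \<noteq> w2"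
    and w: "w1 \<in> cosets \<Lambda> P" "w2 \<in> cosets \<Lambda> P" "x1 \<in> w1" "x2 \<in> w2"
    and x: "x \<in> r_hull S \<Lambda> P \<epsilon> U r" "x \<notin> {Inr w1, Inr w2}"
  shows "\<exists>a\<in>w1. reachable_in (coned_adj S \<Lambda> P) (- {Inr w1}) (Inl a) (Inl x1)
             (2 * (r + \<epsilon>) + 4 + dS S x2 x1)
           \<and> x \<in> coned_ball S \<Lambda> P a (r + \<epsilon>)"
proof -
  let ?E = "coned_adj S \<Lambda> P" and ?X = "- {Inr w1}"
  have X: "range Inl \<subseteq> ?X" "Inr w2 \<in> ?X" using U by auto
  have via_w2: "reachable_in ?E ?X (Inl b) (Inl x1) (2 + dS S x2 x1)" if "b \<in> w2" for b
    using reachable_in_trans[OF coned_reachable_in_coset[OF w(2) that w(4) X(2,1)]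
        coned_reachable_of_dS_le(1)[OF conn order_refl X(1)]] .
  show ?thesis
  proof (cases x)
    case (Inl v)
    with x U have "dVW S (Inl v) (Inr w1) \<le> r" "dVW S (Inl v) (Inr w2) \<le> r"
      unfolding r_hull_def by auto
    then obtain a b where a: "a \<in> w1" "dS S v a \<le> r" and b: "b \<in> w2" "dS S v b \<le> r"
      using dVW_Inl_Inr_le w(3,4) by metis
    have "reachable_in ?E ?X (Inl a) (Inl x1) (r + r + (2 + dS S x2 x1))"
      using reachable_in_trans[OF reachable_in_trans[OF coned_reachable_of_dS_le(2)[OF conn a(2) X(1)]
            coned_reachable_of_dS_le(1)[OF conn b(2) X(1)]] via_w2[OF b(1)]] .
    then have "reachable_in ?E ?X (Inl a) (Inl x1) (2 * (r + \<epsilon>) + 4 + dS S x2 x1)"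
      by (rule reachable_in_mono) auto
    with a Inl show ?thesis unfolding coned_ball_def by auto
  next
    case (Inr w)
    with x U have wc: "w \<in> cosets \<Lambda> P" and "dVW S (Inr w) (Inr w1) \<le> r + \<epsilon>"
        "dVW S (Inr w) (Inr w2) \<le> r + \<epsilon>"
      unfolding r_hull_def by auto
    moreover obtain c0 where "c0 \<in> w" using coset_nonempty[OF wc sg] .
    ultimately obtain c a c' b where ca: "c \<in> w" "a \<in> w1" "dS S c a \<le> r + \<epsilon>"
      and cb: "c' \<in> w" "b \<in> w2" "dS S c' b \<le> r + \<epsilon>"
      using dVW_Inr_Inr_le w(3,4) by metis
    have wX: "Inr w \<in> ?X" using Inr x(2) by simp
    have "reachable_in ?E ?X (Inl a) (Inl x1) ((r + \<epsilon>) + 2 + (r + \<epsilon>) + (2 + dS S x2 x1))"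
      using reachable_in_trans[OF reachable_in_trans[OF reachable_in_trans[OF
            coned_reachable_of_dS_le(2)[OF conn ca(3) X(1)] coned_reachable_in_coset[OF wc ca(1) cb(1) wX X(1)]]
            coned_reachable_of_dS_le(1)[OF conn cb(3) X(1)]] via_w2[OF cb(2)]] .
    then have "reachable_in ?E ?X (Inl a) (Inl x1) (2 * (r + \<epsilon>) + 4 + dS S x2 x1)"
      by (rule reachable_in_mono) auto
    with ca wc Inr show ?thesis unfolding coned_ball_def by auto
  qed
qed

lemma finite_r_hull_two_cosets:
  assumes hyp: "rel_hyperbolic S \<Lambda> P"
    and U: "Inr w1 \<in> U" "Inr w2 \<in> U" "w1 \<noteq> w2" "w1 \<in> cosets \<Lambda> P" "w2 \<in> cosets \<Lambda> P"
  shows "finite (r_hull S \<Lambda> P \<epsilon> U r)"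
proof -
  from hyp have finS: "finite S" and conn: "\<forall>g h. \<exists>p. walk (cay_adj S) p \<and> hd p = g \<and> last p = h"
    and finL: "finite \<Lambda>" and sg: "\<forall>l\<in>\<Lambda>. is_subgroup (P l)" and fine: "fine_graph (coned_adj S \<Lambda> P)"
    unfolding rel_hyperbolic_def by auto
  obtain x1 x2 where x: "x1 \<in> w1" "x2 \<in> w2" using coset_nonempty U(4,5) sg by metis
  define A where "A = {a \<in> w1. reachable_in (coned_adj S \<Lambda> P) (- {Inr w1}) (Inl a) (Inl x1)
                                   (2 * (r + \<epsilon>) + 4 + dS S x2 x1)}"
  have "r_hull S \<Lambda> P \<epsilon> U r \<subseteq> {Inr w1, Inr w2} \<union> (\<Union>a\<in>A. coned_ball S \<Lambda> P a (r + \<epsilon>))"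
    using r_hull_anchored_in_coset[OF conn sg U(1-5) x] unfolding A_def by blast
  moreover have "finite A"
    unfolding A_def by (rule finite_coset_points_reachable_avoiding_cone[OF fine U(4) x(1)])
  ultimately show ?thesis
    using finite_coned_ball[OF finS conn finL sg] by (auto intro: finite_subset)
qed

theorem lemma3p9:
  fixes S :: "'g::group_add set" and \<Lambda> :: "'i set" and P :: "'i \<Rightarrow> 'g set"
    and \<epsilon> R D :: nat and U :: "('g + 'g set) set" and r :: nat
  assumes "rel_hyperbolic S \<Lambda> P"
    and "thin_triangle_constants S \<Lambda> P \<epsilon> R D"
    and "finite U" and "U \<subseteq> VW \<Lambda> P" and "card U \<ge> 2"
    and "0 < r"
  shows "finite (r_hull S \<Lambda> P \<epsilon> U r)"
proof (cases "\<exists>u. Inl u \<in> U")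
  case True
  then obtain u where u: "Inl u \<in> U" by blast
  from assms(1) have "finite S" "\<forall>g h. \<exists>p. walk (cay_adj S) p \<and> hd p = g \<and> last p = h"
    "finite \<Lambda>" and sg: "\<forall>l\<in>\<Lambda>. is_subgroup (P l)"
    unfolding rel_hyperbolic_def by auto
  then show ?thesis
    using finite_subset[OF r_hull_subset_coned_ball[OF u sg] finite_coned_ball] by blast
next
  case False
  have "Suc (Suc 0) \<le> card U" using assms(5) by simp
  then obtain y1 B where B: "U = insert y1 B" "y1 \<notin> B" "Suc 0 \<le> card B"
    by (auto simp: card_le_Suc_iff)
  then obtain y2 where "y2 \<in> B" by (metis card.empty ex_in_conv not_less_eq_eq le0)
  with B False obtain w1 w2 where w: "Inr w1 \<in> U" "Inr w2 \<in> U" "w1 \<noteq> w2"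
    by (metis insertI1 insertI2 sum.exhaust)
  moreover from w assms(4) have "w1 \<in> cosets \<Lambda> P" "w2 \<in> cosets \<Lambda> P"
    unfolding VW_def by auto
  ultimately show ?thesis by (rule finite_r_hull_two_cosets[OF assms(1)])
qed

end
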